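(* Let $c\ge1$ be an integer and $\lambda,\mu,\alpha>0$ with $\lambda<c\mu$. Consider the $(c+1)\times(c+1)$ matrices (rows and columns indexed $0,\dots,c$) $Q_1=\lambda I$, $Q_{-1}=\mathrm{diag}(0,\mu,2\mu,\dots,c\mu)$, and $Q_0$ upper bidiagonal with diagonal entries $(Q_0)_{j,j}=-q_j$, $q_j=\lambda+(c-j)\alpha+j\mu$, superdiagonal entries $(Q_0)_{j,j+1}=(c-j)\alpha$ ($j=0,\dots,c-1$), and all other entries $0$. Let $R=(r_{i,j})$ be the minimal nonnegative solution of $Q_1+RQ_0+R^2Q_{-1}=O$. Then $R$ is upper triangular, its diagonal entries are $$r_{0,0}=\frac{\lambda}{\lambda+c\alpha},\quad r_{c,c}=\frac{\lambda}{c\mu},\quad r_{i,i}=\frac{\lambda+i\mu+(c-i)\alpha-\sqrt{(\lambda+i\mu+(c-i)\alpha)^2-4i\lambda\mu}}{2i\mu}\ (1\le i\le c-1),$$ and for $0\le i<j\le c$, $$r_{i,j}=\frac{(c-j+1)\alpha\, r_{i,j-1}+j\mu\sum_{k=i+1}^{j-1}r_{i,k}r_{k,j}}{\lambda+(c-j)\alpha+j\mu-j\mu(r_{i,i}+r_{j,j})}.$$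
   Context: $Q_{1},Q_0,Q_{-1}$ are the level-up, local and level-down blocks of the homogeneous part (levels $\ge c$, level = number of jobs, phase = number of busy servers) of the QBD generator of the M/M/$c$ queue with exponential setup times under the ON-OFF policy; $R$ is the rate matrix of that homogeneous part. *)

theory Defs
  imports Complex_Main
begin

text \<open>Matrices of size (c+1) x (c+1), rows and columns indexed 0..c, represented as
  functions nat => nat => real; only entries with indices in {0..c} are meaningful.\<close>

definition mmul :: "nat \<Rightarrow> (nat \<Rightarrow> nat \<Rightarrow> real) \<Rightarrow> (nat \<Rightarrow> nat \<Rightarrow> real) \<Rightarrow> (nat \<Rightarrow> nat \<Rightarrow> real)" where
  "mmul c A B = (\<lambda>i j. \<Sum>k=0..c. A i k * B k j)"

definition Qup :: "real \<Rightarrow> nat \<Rightarrow> nat \<Rightarrow> real" where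
  "Qup lam = (\<lambda>i j. if i = j then lam else 0)"

definition Qdown :: "real \<Rightarrow> nat \<Rightarrow> nat \<Rightarrow> real" where
  "Qdown mu = (\<lambda>i j. if i = j then real j * mu else 0)"

definition Qloc :: "nat \<Rightarrow> real \<Rightarrow> real \<Rightarrow> real \<Rightarrow> nat \<Rightarrow> nat \<Rightarrow> real" where
  "Qloc c lam mu al = (\<lambda>i j.
     if i = j then - (lam + real (c - j) * al + real j * mu)
     else if j = i + 1 then real (c - i) * al else 0)"

definition nonneg_mat :: "nat \<Rightarrow> (nat \<Rightarrow> nat \<Rightarrow> real) \<Rightarrow> bool" where
  "nonneg_mat c R \<longleftrightarrow> (\<forall>i\<le>c. \<forall>j\<le>c. 0 \<le> R i j)"

definition solves_R_eq :: "nat \<Rightarrow> real \<Rightarrow> real \<Rightarrow> real \<Rightarrow> (nat \<Rightarrow> nat \<Rightarrow> real) \<Rightarrow> bool" where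
  "solves_R_eq c lam mu al R \<longleftrightarrow>
     (\<forall>i\<le>c. \<forall>j\<le>c. Qup lam i j + mmul c R (Qloc c lam mu al) i j
                      + mmul c (mmul c R R) (Qdown mu) i j = 0)"

definition minimal_nonneg_solution :: "nat \<Rightarrow> real \<Rightarrow> real \<Rightarrow> real \<Rightarrow> (nat \<Rightarrow> nat \<Rightarrow> real) \<Rightarrow> bool" where
  "minimal_nonneg_solution c lam mu al R \<longleftrightarrow>
     nonneg_mat c R \<and> solves_R_eq c lam mu al R \<and>
     (\<forall>S. nonneg_mat c S \<and> solves_R_eq c lam mu al S \<longrightarrow> (\<forall>i\<le>c. \<forall>j\<le>c. R i j \<le> S i j))"

end

theory Submission
  imports Defs
begin

text \<open>An explicit nonnegative upper triangular solution is built entrywise: on the diagonal the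
  smaller root of the scalar quadratic \<open>i\<mu> x\<^sup>2 - q\<^sub>i x + \<lambda>\<close>, above the diagonal the
  entry obtained by solving the \<open>(i,j)\<close> equation, in which it occurs linearly with a positive
  coefficient. The minimal solution lies between \<open>0\<close> and this one, hence is upper triangular,
  and then the matrix equation decouples: each diagonal entry is a root of the same quadratic not
  exceeding the smaller one, hence equal to it, and the entries above the diagonal obey the
  recursion.\<close>

lemma mmul_Qloc:
  assumes "j \<le> c"
  shows "mmul c M (Qloc c lam mu al) i j
    = (if j = 0 then 0 else real (c - j + 1) * al * M i (j - 1))
      - (lam + real (c - j) * al + real j * mu) * M i j"
proof -
  let ?q = "lam + real (c - j) * al + real j * mu"
  have "Qloc c lam mu al k j
      = (if k = j then - ?q else 0) + (if Suc k = j then real (c - k) * al else 0)" for k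
    by (auto simp: Qloc_def)
  then have "mmul c M (Qloc c lam mu al) i j
      = (\<Sum>k=0..c. M i k * (if k = j then - ?q else 0))
        + (\<Sum>k=0..c. M i k * (if Suc k = j then real (c - k) * al else 0))"
    by (simp add: mmul_def distrib_left sum.distrib)
  also have "(\<Sum>k=0..c. M i k * (if k = j then - ?q else 0)) = - ?q * M i j"
    using assms by (simp add: if_distrib cong: if_cong)
  also have "(\<Sum>k=0..c. M i k * (if Suc k = j then real (c - k) * al else 0))
      = (if j = 0 then 0 else real (c - j + 1) * al * M i (j - 1))"
    using assms by (cases j) (auto simp: Suc_diff_Suc if_distrib cong: if_cong)
  finally show ?thesis by (simp add: algebra_simps)
qed

lemma mmul_Qdown:
  assumes "j \<le> c"
  shows "mmul c M (Qdown mu) i j = real j * mu * M i j"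
  using assms by (simp add: mmul_def Qdown_def if_distrib cong: if_cong)

lemma R_eq_entry:
  assumes "j \<le> c"
  shows "Qup lam i j + mmul c M (Qloc c lam mu al) i j + mmul c (mmul c M M) (Qdown mu) i j
    = (if i = j then lam else 0) + (if j = 0 then 0 else real (c - j + 1) * al * M i (j - 1))
      - (lam + real (c - j) * al + real j * mu) * M i j + real j * mu * mmul c M M i j"
  using assms by (simp add: mmul_Qloc mmul_Qdown Qup_def)

definition upper_triangular :: "nat \<Rightarrow> (nat \<Rightarrow> nat \<Rightarrow> real) \<Rightarrow> bool" where
  "upper_triangular c M \<longleftrightarrow> (\<forall>i\<le>c. \<forall>j\<le>c. j < i \<longrightarrow> M i j = 0)"

lemma upper_triangular_mmul_below:
  assumes "upper_triangular c M" "j < i" "i \<le> c"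
  shows "mmul c M M i j = 0"
  unfolding mmul_def
proof (rule sum.neutral, rule ballI)
  fix k assume "k \<in> {0..c}"
  then show "M i k * M k j = 0"
    using assms unfolding upper_triangular_def by (cases "k < i") auto
qed

lemma upper_triangular_mmul_from_to:
  assumes "upper_triangular c M" "i \<le> j" "j \<le> c"
  shows "mmul c M M i j = (\<Sum>k=i..j. M i k * M k j)"
  unfolding mmul_def
proof (rule sum.mono_neutral_right)
  show "\<forall>k\<in>{0..c} - {i..j}. M i k * M k j = 0"
    using assms unfolding upper_triangular_def by auto
qed (use assms in auto)

lemma upper_triangular_mmul_diag:
  assumes "upper_triangular c M" "i \<le> c"
  shows "mmul c M M i i = (M i i)\<^sup>2"
  using upper_triangular_mmul_from_to[OF assms(1) order_refl assms(2)]
  by (simp add: power2_eq_square)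

lemma upper_triangular_mmul_above:
  assumes "upper_triangular c M" "i < j" "j \<le> c"
  shows "mmul c M M i j = M i i * M i j + M i j * M j j + (\<Sum>k=i+1..j-1. M i k * M k j)"
proof -
  have "{i..j} = insert i (insert j {i+1..j-1})"
    using assms(2) by auto
  then show ?thesis
    using upper_triangular_mmul_from_to[OF assms(1) less_imp_le[OF assms(2)] assms(3)] assms(2)
    by (simp add: algebra_simps)
qed

lemma upper_triangular_R_eq_below:
  assumes "upper_triangular c M" "j < i" "i \<le> c"
  shows "Qup lam i j + mmul c M (Qloc c lam mu al) i j + mmul c (mmul c M M) (Qdown mu) i j = 0"
proof -
  have "j \<le> c" using assms(2,3) by simp
  then show ?thesis
    unfolding R_eq_entry[OF \<open>j \<le> c\<close>]
    using assms upper_triangular_mmul_below[OF assms] by (auto simp: upper_triangular_def)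
qed

lemma upper_triangular_R_eq_diag:
  assumes "upper_triangular c M" "i \<le> c"
  shows "Qup lam i i + mmul c M (Qloc c lam mu al) i i + mmul c (mmul c M M) (Qdown mu) i i
    = real i * mu * (M i i)\<^sup>2 - (lam + real i * mu + real (c - i) * al) * M i i + lam"
  unfolding R_eq_entry[OF assms(2)] upper_triangular_mmul_diag[OF assms]
  using assms by (auto simp: upper_triangular_def algebra_simps)

lemma upper_triangular_R_eq_above:
  assumes "upper_triangular c M" "i < j" "j \<le> c"
  shows "Qup lam i j + mmul c M (Qloc c lam mu al) i j + mmul c (mmul c M M) (Qdown mu) i j
    = real (c - j + 1) * al * M i (j - 1) + real j * mu * (\<Sum>k=i+1..j-1. M i k * M k j)
      - M i j * (lam + real (c - j) * al + real j * mu - real j * mu * (M i i + M j j))"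
  unfolding R_eq_entry[OF assms(3)] upper_triangular_mmul_above[OF assms]
  using assms(2) by (simp add: algebra_simps)

lemma upper_triangular_solution_above:
  assumes "upper_triangular c M" "solves_R_eq c lam mu al M" "i < j" "j \<le> c"
    and "lam + real (c - j) * al + real j * mu - real j * mu * (M i i + M j j) \<noteq> 0"
  shows "M i j = (real (c - j + 1) * al * M i (j - 1) + real j * mu * (\<Sum>k=i+1..j-1. M i k * M k j))
    / (lam + real (c - j) * al + real j * mu - real j * mu * (M i i + M j j))"
  using assms upper_triangular_R_eq_above[OF assms(1,3,4), of lam mu al]
  unfolding solves_R_eq_def by (simp add: field_simps)

text \<open>The smaller root \<open>x\<close> of \<open>a t\<^sup>2 - q t + b\<close> is characterised by \<open>2 a x < q\<close>;
  allowing \<open>a = 0\<close> covers the linear equation of the diagonal entry \<open>r\<^sub>0\<^sub>0\<close> as well.\<close>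

lemma smaller_root_le:
  fixes a b q x t :: real
  assumes "0 \<le> a" "a * x\<^sup>2 - q * x + b = 0" "2 * a * x < q" "a * t\<^sup>2 - q * t + b \<le> 0"
  shows "x \<le> t"
proof (rule ccontr)
  assume "\<not> x \<le> t"
  then have "t < x" by simp
  moreover have "a * (t + x) - q < 0"
    using \<open>t < x\<close> assms(1,3) mult_left_mono[of t x a] by (simp add: distrib_left)
  ultimately have "0 < (t - x) * (a * (t + x) - q)"
    by (simp add: mult_neg_neg)
  also have "(t - x) * (a * (t + x) - q) = (a * t\<^sup>2 - q * t + b) - (a * x\<^sup>2 - q * x + b)"
    by (simp add: power2_eq_square algebra_simps)
  finally show False using assms(2,4) by simp
qed

lemma smaller_root_less:
  fixes a b q x t :: real
  assumes "0 \<le> a" "a * x\<^sup>2 - q * x + b = 0" "2 * a * x < q" "a * t\<^sup>2 - q * t + b < 0"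
  shows "x < t"
proof (rule ccontr)
  assume "\<not> x < t"
  then have "t \<le> x" by simp
  moreover have "a * (t + x) - q < 0"
    using \<open>t \<le> x\<close> assms(1,3) mult_left_mono[of t x a] by (simp add: distrib_left)
  ultimately have "0 \<le> (t - x) * (a * (t + x) - q)"
    by (simp add: mult_nonpos_nonpos)
  also have "(t - x) * (a * (t + x) - q) = (a * t\<^sup>2 - q * t + b) - (a * x\<^sup>2 - q * x + b)"
    by (simp add: power2_eq_square algebra_simps)
  finally show False using assms(2,4) by simp
qed

lemma smaller_root_pos:
  fixes a b q x :: real
  assumes "0 \<le> a" "a * x\<^sup>2 - q * x + b = 0" "2 * a * x < q" "0 < b" "0 < q"
  shows "0 < x"
proof -
  have "0 < q - a * x"
    using assms(3,5) by (cases "a * x \<le> 0") auto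
  moreover have "x * (q - a * x) = b"
    using assms(2) by (simp add: power2_eq_square algebra_simps)
  ultimately show ?thesis
    using assms(4) zero_less_mult_pos2 by fastforce
qed

lemma smaller_root_formula:
  fixes a b q :: real
  assumes "0 < a" "4 * a * b < q\<^sup>2"
  defines "x \<equiv> (q - sqrt (q\<^sup>2 - 4 * a * b)) / (2 * a)"
  shows "a * x\<^sup>2 - q * x + b = 0" "2 * a * x < q"
proof -
  define s where "s = sqrt (q\<^sup>2 - 4 * a * b)"
  have s2: "s\<^sup>2 = q\<^sup>2 - 4 * a * b" and "0 < s"
    using assms(2) by (simp_all add: s_def)
  have ax: "2 * a * x = q - s"
    using assms(1) by (simp add: x_def s_def)
  have "4 * a * (a * x\<^sup>2 - q * x + b) = (2 * a * x)\<^sup>2 - 2 * q * (2 * a * x) + 4 * a * b"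
    by (simp add: power2_eq_square algebra_simps)
  also have "\<dots> = 0"
    unfolding ax using s2 by (simp add: power2_eq_square algebra_simps)
  finally show "a * x\<^sup>2 - q * x + b = 0"
    using assms(1) by simp
  show "2 * a * x < q"
    using ax \<open>0 < s\<close> by simp
qed

lemma four_mult_less_sum_square:
  fixes a b r :: real
  assumes "0 < a" "0 < b" "0 \<le> r" "a \<noteq> b \<or> 0 < r"
  shows "4 * a * b < (b + a + r)\<^sup>2"
proof -
  have "(b + a + r)\<^sup>2 - 4 * a * b = (a - b)\<^sup>2 + r * (2 * a + 2 * b + r)"
    by (simp add: power2_eq_square algebra_simps)
  moreover have "0 < (a - b)\<^sup>2 + r * (2 * a + 2 * b + r)"
    using assms by (cases "r = 0") (auto intro!: add_nonneg_pos)
  ultimately show ?thesis by simp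
qed

locale mmc_setup =
  fixes c :: nat and lam mu al :: real
  assumes c_ge_1: "1 \<le> c" and lam_pos: "0 < lam" and mu_pos: "0 < mu" and al_pos: "0 < al"
    and stable: "lam < real c * mu"
begin

definition R_diag :: "nat \<Rightarrow> real" where
  "R_diag i = (if i = 0 then lam / (lam + real c * al) else
     (lam + real i * mu + real (c - i) * al
      - sqrt ((lam + real i * mu + real (c - i) * al)\<^sup>2 - 4 * real i * lam * mu))
     / (2 * real i * mu))"

lemma R_diag_root:
  assumes "i \<le> c"
  shows "real i * mu * (R_diag i)\<^sup>2 - (lam + real i * mu + real (c - i) * al) * R_diag i + lam = 0"
      (is ?root)
    and "2 * (real i * mu) * R_diag i < lam + real i * mu + real (c - i) * al"
      (is ?smaller)
proof -
  have "?root \<and> ?smaller"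
  proof (cases "i = 0")
    case True
    have "0 < lam + real c * al"
      using lam_pos al_pos by (simp add: add_pos_nonneg)
    then show ?thesis
      using True by (simp add: R_diag_def)
  next
    case False
    have "4 * (real i * mu) * lam < (lam + real i * mu + real (c - i) * al)\<^sup>2"
    proof (rule four_mult_less_sum_square)
      show "real i * mu \<noteq> lam \<or> 0 < real (c - i) * al"
        using assms stable al_pos by (cases "i = c") auto
    qed (use False mu_pos lam_pos al_pos in auto)
    moreover have "R_diag i = (lam + real i * mu + real (c - i) * al
        - sqrt ((lam + real i * mu + real (c - i) * al)\<^sup>2 - 4 * (real i * mu) * lam))
        / (2 * (real i * mu))"
      using False by (simp add: R_diag_def mult_ac)
    ultimately show ?thesis
      using smaller_root_formula[of "real i * mu"] False mu_pos by simp
  qed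
  then show ?root ?smaller by auto
qed

lemma R_diag_pos:
  assumes "i \<le> c"
  shows "0 < R_diag i"
  using smaller_root_pos[OF _ R_diag_root[OF assms]] mu_pos lam_pos al_pos
  by (simp add: add_pos_nonneg)

lemma R_diag_less_one:
  assumes "i < c"
  shows "R_diag i < 1"
  using smaller_root_less[OF _ R_diag_root[OF less_imp_le[OF assms]], of 1] mu_pos al_pos assms
  by simp

lemma R_diag_le:
  assumes "i \<le> c"
  shows "real i * mu * R_diag i \<le> lam"
proof (cases "i = 0")
  case False
  define t where "t = lam / (real i * mu)"
  have "0 < real i * mu" using False mu_pos by simp
  have at: "real i * mu * t = lam"
    using False mu_pos by (simp add: t_def)
  have "real i * mu * t\<^sup>2 - (lam + real i * mu + real (c - i) * al) * t + lam
      = - t * (real (c - i) * al)"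
    using at by (simp add: power2_eq_square algebra_simps)
  also have "\<dots> \<le> 0"
    using \<open>0 < real i * mu\<close> lam_pos al_pos by (simp add: t_def)
  finally have "R_diag i \<le> t"
    using smaller_root_le[OF _ R_diag_root[OF assms]] mu_pos by simp
  then show ?thesis
    using \<open>0 < real i * mu\<close> at by (metis mult_left_mono less_imp_le)
qed (use lam_pos in simp)

lemma R_diag_last: "R_diag c = lam / (real c * mu)"
proof -
  define t where "t = lam / (real c * mu)"
  have at: "real c * mu * t = lam"
    using c_ge_1 mu_pos by (simp add: t_def)
  then have root: "real c * mu * t\<^sup>2 - (lam + real c * mu + real (c - c) * al) * t + lam = 0"
    by (simp add: power2_eq_square algebra_simps)
  have "2 * (real c * mu) * t < lam + real c * mu + real (c - c) * al"
    using at stable by simp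
  then have "t \<le> R_diag c"
    using smaller_root_le[OF _ root _ eq_refl[OF R_diag_root(1)[OF order_refl]]] mu_pos by simp
  moreover have "R_diag c \<le> t"
    using smaller_root_le[OF _ R_diag_root[OF order_refl] eq_refl[OF root]] mu_pos by simp
  ultimately show ?thesis by (simp add: t_def)
qed

text \<open>The denominator of the recursion is positive because \<open>R_diag j\<close> solves
  \<open>x (q\<^sub>j - j\<mu> x) = \<lambda>\<close> with \<open>j\<mu> x \<le> \<lambda>\<close>, so \<open>q\<^sub>j - j\<mu> x \<ge> j\<mu> > j\<mu> R_diag i\<close>.\<close>

lemma denominator_pos:
  assumes "i < j" "j \<le> c"
  shows "0 < lam + real (c - j) * al + real j * mu - real j * mu * (R_diag i + R_diag j)"
proof -
  let ?x = "R_diag j" and ?q = "lam + real j * mu + real (c - j) * al"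
  have "?x * (real j * mu) \<le> lam"
    using R_diag_le[OF assms(2)] by (simp add: mult.commute)
  also have "lam = ?x * (?q - real j * mu * ?x)"
    using R_diag_root(1)[OF assms(2)] by (simp add: power2_eq_square algebra_simps)
  finally have "real j * mu \<le> ?q - real j * mu * ?x"
    using R_diag_pos[OF assms(2)] by simp
  moreover have "real j * mu * R_diag i < real j * mu"
    using R_diag_less_one[of i] assms mu_pos by simp
  ultimately show ?thesis by (simp add: algebra_simps)
qed

function R_rec :: "nat \<Rightarrow> nat \<Rightarrow> real" where
  "R_rec i j = (if j < i then 0 else if i = j then R_diag i else
     (real (c - j + 1) * al * R_rec i (j - 1) + real j * mu * (\<Sum>k=i+1..j-1. R_rec i k * R_rec k j))
     / (lam + real (c - j) * al + real j * mu - real j * mu * (R_diag i + R_diag j)))"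
  by pat_completeness auto
termination by (relation "measure (\<lambda>(i, j). j - i)") auto

declare R_rec.simps [simp del]

lemma R_rec_below: "j < i \<Longrightarrow> R_rec i j = 0"
  by (simp add: R_rec.simps)

lemma R_rec_diag: "R_rec i i = R_diag i"
  by (simp add: R_rec.simps)

lemma R_rec_above:
  "i < j \<Longrightarrow> R_rec i j = (real (c - j + 1) * al * R_rec i (j - 1) + real j * mu * (\<Sum>k=i+1..j-1. R_rec i k * R_rec k j))
     / (lam + real (c - j) * al + real j * mu - real j * mu * (R_rec i i + R_rec j j))"
  by (simp add: R_rec.simps[of i j] R_rec_diag)

lemma upper_triangular_R_rec: "upper_triangular c R_rec"
  by (simp add: upper_triangular_def R_rec_below)

lemma R_rec_nonneg: "j \<le> c \<Longrightarrow> 0 \<le> R_rec i j"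
proof (induction i j rule: R_rec.induct)
  case (1 i j)
  consider "j < i" | "i = j" | "i < j" by linarith
  then show ?case
  proof cases
    case 3
    have "0 \<le> real (c - j + 1) * al * R_rec i (j - 1)"
      using 1 3 al_pos by simp
    moreover have "0 \<le> (\<Sum>k=i+1..j-1. R_rec i k * R_rec k j)"
      using 1 3 by (intro sum_nonneg mult_nonneg_nonneg) auto
    ultimately show ?thesis
      using 3 denominator_pos[OF 3 "1.prems"] mu_pos by (simp add: R_rec_above R_rec_diag)
  qed (use 1 R_diag_pos in \<open>simp_all add: R_rec_below R_rec_diag less_imp_le\<close>)
qed

lemma solves_R_eq_R_rec: "solves_R_eq c lam mu al R_rec"
  unfolding solves_R_eq_def
proof (intro allI impI)
  fix i j assume "i \<le> c" "j \<le> c"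
  consider "j < i" | "i = j" | "i < j" by linarith
  then show "Qup lam i j + mmul c R_rec (Qloc c lam mu al) i j
      + mmul c (mmul c R_rec R_rec) (Qdown mu) i j = 0"
  proof cases
    case 1
    then show ?thesis
      using upper_triangular_R_eq_below[OF upper_triangular_R_rec _ \<open>i \<le> c\<close>] by blast
  next
    case 2
    then show ?thesis
      using upper_triangular_R_eq_diag[OF upper_triangular_R_rec \<open>i \<le> c\<close>] R_diag_root(1)[OF \<open>i \<le> c\<close>]
      by (simp add: R_rec_diag)
  next
    case 3
    then show ?thesis
      using upper_triangular_R_eq_above[OF upper_triangular_R_rec 3 \<open>j \<le> c\<close>]
        R_rec_above[OF 3] denominator_pos[OF 3 \<open>j \<le> c\<close>]
      by (simp add: R_rec_diag)
  qed
qed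

lemma minimal_solution_upper_triangular:
  assumes "minimal_nonneg_solution c lam mu al R"
  shows "upper_triangular c R"
proof -
  have "R i j \<le> R_rec i j" "0 \<le> R i j" if "i \<le> c" "j \<le> c" for i j
    using assms R_rec_nonneg solves_R_eq_R_rec that
    unfolding minimal_nonneg_solution_def nonneg_mat_def by blast+
  then show ?thesis
    unfolding upper_triangular_def by (metis R_rec_below order_antisym)
qed

lemma minimal_solution_diag:
  assumes "minimal_nonneg_solution c lam mu al R" "i \<le> c"
  shows "R i i = R_diag i"
proof (rule order_antisym)
  show "R i i \<le> R_diag i"
    using assms R_rec_nonneg solves_R_eq_R_rec
    unfolding minimal_nonneg_solution_def nonneg_mat_def by (metis R_rec_diag)
  have "solves_R_eq c lam mu al R"
    using assms(1) by (simp add: minimal_nonneg_solution_def)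
  then have "real i * mu * (R i i)\<^sup>2 - (lam + real i * mu + real (c - i) * al) * R i i + lam = 0"
    using upper_triangular_R_eq_diag[OF minimal_solution_upper_triangular[OF assms(1)] assms(2),
        where lam = lam and mu = mu and al = al] assms(2)
    unfolding solves_R_eq_def by simp
  then show "R_diag i \<le> R i i"
    using smaller_root_le[OF _ R_diag_root[OF assms(2)]] mu_pos by simp
qed

end

theorem mainTheorem4:
  fixes c :: nat and lam mu al :: real and R :: "nat \<Rightarrow> nat \<Rightarrow> real"
  assumes "c \<ge> 1" and "lam > 0" and "mu > 0" and "al > 0" and "lam < real c * mu"
    and "minimal_nonneg_solution c lam mu al R"
  shows "(\<forall>i\<le>c. \<forall>j\<le>c. j < i \<longrightarrow> R i j = 0)
    \<and> R 0 0 = lam / (lam + real c * al)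
    \<and> R c c = lam / (real c * mu)
    \<and> (\<forall>i. 1 \<le> i \<and> i \<le> c - 1 \<longrightarrow>
         R i i = (lam + real i * mu + real (c - i) * al
                  - sqrt ((lam + real i * mu + real (c - i) * al)\<^sup>2 - 4 * real i * lam * mu))
                 / (2 * real i * mu))
    \<and> (\<forall>i j. i < j \<and> j \<le> c \<longrightarrow>
         R i j = (real (c - j + 1) * al * R i (j - 1)
                  + real j * mu * (\<Sum>k=i+1..j-1. R i k * R k j))
                 / (lam + real (c - j) * al + real j * mu - real j * mu * (R i i + R j j)))"
proof -
  interpret mmc_setup c lam mu al
    using assms(1-5) by unfold_locales
  have upper: "upper_triangular c R"
    using minimal_solution_upper_triangular[OF assms(6)] .
  have diag: "R i i = R_diag i" if "i \<le> c" for i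
    using minimal_solution_diag[OF assms(6) that] .
  have above: "R i j = (real (c - j + 1) * al * R i (j - 1) + real j * mu * (\<Sum>k=i+1..j-1. R i k * R k j))
      / (lam + real (c - j) * al + real j * mu - real j * mu * (R i i + R j j))" if "i < j" "j \<le> c" for i j
    using upper_triangular_solution_above[OF upper _ that] assms(6) denominator_pos[OF that]
      diag[of i] diag[of j] that
    by (simp add: minimal_nonneg_solution_def)
  show ?thesis
    using upper diag[of 0] diag[of c] R_diag_last above
    by (auto simp: upper_triangular_def diag R_diag_def)
qed

end
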